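(* Fix $n\ge 2$, a dictator agent $t\in\{1,\dots,n\}$, and parameters $k\in[2,+\infty)$ and $a\in(0,1)$. Let $f$ be the mechanism that, on a profile $\mathbf{x}=(x_1,\dots,x_n)$ with $x_l=\min\mathbf{x}$, $x_r=\max\mathbf{x}$, $L=x_r-x_l$, outputs $l_1=x_t$ and $$l_2=\begin{cases} x_t+\max\left\{\frac{(1-a)k}{a}(x_t-x_l),\; x_r-x_t\right\} & \text{if } x_t\in[x_l,\,x_l+aL),\\[2pt] x_t-\max\left\{x_t-x_l,\; \frac{ak}{1-a}(x_r-x_t)\right\} & \text{if } x_t\in[x_l+aL,\,x_r].\end{cases}$$ Then for every profile $\mathbf{x}\in\mathbb{R}^n$, $SC(f,\mathbf{x})\le \max\left\{\frac{(1-a)k}{2a},\frac{ak}{2(1-a)}\right\}(n-1)\,OPT(\mathbf{x})$.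
   Context: Two-facility game on a line: agent $i$ has location $x_i\in\mathbb{R}$. For facility locations $\{l_1,l_2\}$, an agent at $y$ has cost $\min\{|l_1-y|,|l_2-y|\}$. $SC(f,\mathbf{x})$ is the sum over all agents of their costs under $f(\mathbf{x})$, and $OPT(\mathbf{x})=\min_{l_1,l_2\in\mathbb{R}}\sum_i\min\{|l_1-x_i|,|l_2-x_i|\}$. *)

theory Defs
  imports Complex_Main
begin

text \<open>Profiles: agents are indexed by 1..n, a profile is x :: nat => real
  (only the values x 1, ..., x n matter). Facility locations are a pair (l1, l2).\<close>

definition agent_cost :: "real \<times> real \<Rightarrow> real \<Rightarrow> real" where
  "agent_cost loc y = min \<bar>fst loc - y\<bar> \<bar>snd loc - y\<bar>"

definition SC :: "nat \<Rightarrow> (nat \<Rightarrow> real) \<Rightarrow> real \<times> real \<Rightarrow> real" where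
  "SC n x loc = (\<Sum>i\<in>{1..n}. agent_cost loc (x i))"

definition OPT :: "nat \<Rightarrow> (nat \<Rightarrow> real) \<Rightarrow> real" where
  "OPT n x = (INF loc\<in>(UNIV :: (real \<times> real) set). SC n x loc)"

definition mech :: "nat \<Rightarrow> nat \<Rightarrow> real \<Rightarrow> real \<Rightarrow> (nat \<Rightarrow> real) \<Rightarrow> real \<times> real" where
  "mech n t k a x =
    (let xl = Min (x ` {1..n}); xr = Max (x ` {1..n}); L = xr - xl; xt = x t in
     (xt,
      if xl \<le> xt \<and> xt < xl + a * L
      then xt + max (((1 - a) * k / a) * (xt - xl)) (xr - xt)
      else xt - max (xt - xl) ((a * k / (1 - a)) * (xr - xt))))"

end

theory Submission
  imports Defs
begin

text \<open>Any three agents u \<le> v \<le> w force OPT \<ge> min (v - u) (w - v): two facilities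
  leave two of them sharing one.  Put d = x_t - x_l and e = x_r - x_t; if x_t lies in the left
  part of the profile then d \<le> a/(1-a) e.  An agent y left of x_t costs at most d and is
  charged against the triple (y, x_t, x_r).  Right of x_t, if the second facility is x_r, the
  triple (x_t, y, x_r) bounds its cost; otherwise the facility is at x_t + c d with
  c = (1-a)k/a, and the cost is at most min (c d / 2) e, charged against (x_l, x_t, x_r).
  The dictator costs nothing, whence the factor n - 1; the right part is the mirror image
  under x \<mapsto> -x.\<close>

lemma agent_cost_nonneg: "0 \<le> agent_cost loc y"
  unfolding agent_cost_def by simp

lemma SC_nonneg: "0 \<le> SC n x loc"
  unfolding SC_def by (intro sum_nonneg agent_cost_nonneg)

lemma OPT_nonneg: "0 \<le> OPT n x"
  unfolding OPT_def by (rule cINF_greatest) (auto intro: SC_nonneg)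

lemma min_gap_le_agent_cost_sum:
  assumes "u \<le> v" "v \<le> w"
  shows "min (v - u) (w - v) \<le> agent_cost loc u + agent_cost loc v + agent_cost loc w"
  using assms unfolding agent_cost_def
  by (cases loc) (auto simp: min_def abs_if split: if_splits)

lemma min_gap_le_OPT:
  assumes "p \<in> {1..n}" "q \<in> {1..n}" "r \<in> {1..n}" "x p \<le> x q" "x q \<le> x r"
  shows "min (x q - x p) (x r - x q) \<le> OPT n x"
proof (cases "p = q \<or> q = r \<or> p = r")
  case True
  then have "min (x q - x p) (x r - x q) \<le> 0" using assms by auto
  then show ?thesis using OPT_nonneg[of n x] by linarith
next
  case False
  show ?thesis unfolding OPT_def
  proof (rule cINF_greatest)
    fix loc
    have "min (x q - x p) (x r - x q)
          \<le> agent_cost loc (x p) + agent_cost loc (x q) + agent_cost loc (x r)"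
      using min_gap_le_agent_cost_sum assms by blast
    also have "\<dots> = (\<Sum>i\<in>{p,q,r}. agent_cost loc (x i))" using False by simp
    also have "\<dots> \<le> SC n x loc" unfolding SC_def
      by (rule sum_mono2) (use assms in \<open>auto intro: agent_cost_nonneg\<close>)
    finally show "min (x q - x p) (x r - x q) \<le> SC n x loc" .
  qed simp
qed

lemma dictator_left_cost_le:
  fixes xl xt xr y r c M Op :: real
  assumes gap: "\<And>u v w. \<lbrakk>u \<in> S; v \<in> S; w \<in> S; u \<le> v; v \<le> w\<rbrakk> \<Longrightarrow> min (v - u) (w - v) \<le> Op"
    and mem: "xl \<in> S" "xt \<in> S" "xr \<in> S" "y \<in> S"
    and order: "xl \<le> xt" "xt \<le> xr" "xl \<le> y" "y \<le> xr"
    and left: "xt - xl \<le> r * (xr - xt)"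
    and "0 \<le> Op" "1 \<le> M" "r \<le> M" "c \<le> 2 * M"
  shows "min \<bar>xt - y\<bar> \<bar>xt + max (c * (xt - xl)) (xr - xt) - y\<bar> \<le> M * Op"
proof -
  define d where "d = xt - xl"
  define e where "e = xr - xt"
  have Op_le: "Op \<le> M * Op" using \<open>1 \<le> M\<close> \<open>0 \<le> Op\<close> by (simp add: mult_le_cancel_right1)
  have scale: "M * z \<le> M * Op" if "z \<le> Op" for z using that \<open>1 \<le> M\<close> by (simp add: mult_left_mono)
  have d_le: "d \<le> M * e"
    using left mult_right_mono[OF \<open>r \<le> M\<close>, of e] order unfolding d_def e_def by simp
  show ?thesis
  proof (cases "y < xt")
    case True
    have "min (xt - y) e \<le> Op" using gap[OF mem(4,2,3)] True order unfolding e_def by simp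
    moreover have "xt - y \<le> d" unfolding d_def using order by simp
    ultimately have "xt - y \<le> M * Op" using Op_le d_le scale[of e] by (cases "xt - y \<le> e") auto
    then show ?thesis using True by simp
  next
    case False
    show ?thesis
    proof (cases "c * d \<le> e")
      case True
      have "min (y - xt) (xr - y) \<le> Op" using gap[OF mem(2,4,3)] False order by simp
      then show ?thesis using True False order Op_le unfolding d_def e_def by auto
    next
      case far: False
      then have second: "max (c * (xt - xl)) (xr - xt) = c * d" unfolding d_def e_def by simp
      define cost where "cost = min \<bar>xt - y\<bar> \<bar>xt + c * d - y\<bar>"
      have "cost \<le> c * d / 2"
        using False far order unfolding cost_def e_def by (auto simp: min_def abs_if)
      moreover have "cost \<le> e" using False order unfolding cost_def e_def by auto
      moreover have "min d e \<le> Op" using gap[OF mem(1,2,3)] order unfolding d_def e_def by simp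
      moreover have "c * d / 2 \<le> M * d"
        using mult_right_mono[OF \<open>c \<le> 2 * M\<close>, of d] order unfolding d_def by simp
      ultimately have "cost \<le> M * Op" using Op_le scale[of d] by (cases "d \<le> e") auto
      then show ?thesis unfolding second cost_def .
    qed
  qed
qed

lemma dictator_right_cost_le:
  fixes xl xt xr y r c M Op :: real
  assumes gap: "\<And>u v w. \<lbrakk>u \<in> S; v \<in> S; w \<in> S; u \<le> v; v \<le> w\<rbrakk> \<Longrightarrow> min (v - u) (w - v) \<le> Op"
    and mem: "xl \<in> S" "xt \<in> S" "xr \<in> S" "y \<in> S"
    and order: "xl \<le> xt" "xt \<le> xr" "xl \<le> y" "y \<le> xr"
    and right: "xr - xt \<le> r * (xt - xl)"
    and "0 \<le> Op" "1 \<le> M" "r \<le> M" "c \<le> 2 * M"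
  shows "min \<bar>xt - y\<bar> \<bar>xt - max (xt - xl) (c * (xr - xt)) - y\<bar> \<le> M * Op"
proof -
  have "min \<bar>-xt - -y\<bar> \<bar>-xt + max (c * (-xt - -xr)) (-xl - -xt) - -y\<bar> \<le> M * Op"
  proof (rule dictator_left_cost_le[where S = "uminus ` S" and r = r])
    fix u v w assume "u \<in> uminus ` S" "v \<in> uminus ` S" "w \<in> uminus ` S" "u \<le> v" "v \<le> w"
    then have "min ((-v) - (-w)) ((-u) - (-v)) \<le> Op" by (intro gap) auto
    then show "min (v - u) (w - v) \<le> Op" by (simp add: min.commute)
  qed (use assms in auto)
  then show ?thesis by (simp add: abs_minus_commute max.commute)
qed

lemma dictator_ratio_bounds:
  fixes a k :: real
  assumes "0 < a" "a < 1" "2 \<le> k"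
  defines "M \<equiv> max (((1 - a) * k) / (2 * a)) ((a * k) / (2 * (1 - a)))"
  shows "1 \<le> M" and "a / (1 - a) \<le> M" and "(1 - a) / a \<le> M"
    and "(1 - a) * k / a \<le> 2 * M" and "a * k / (1 - a) \<le> 2 * M"
proof -
  have "(1 - a) * k / a = 2 * (((1 - a) * k) / (2 * a))"
    and "a * k / (1 - a) = 2 * ((a * k) / (2 * (1 - a)))" using assms by (simp_all add: field_simps)
  then show "(1 - a) * k / a \<le> 2 * M" and "a * k / (1 - a) \<le> 2 * M"
    unfolding M_def by simp_all
  have "a / (1 - a) * 1 \<le> a / (1 - a) * (k / 2)" using assms by (intro mult_left_mono) auto
  then show right: "a / (1 - a) \<le> M" unfolding M_def by (simp add: field_simps)
  have "(1 - a) / a * 1 \<le> (1 - a) / a * (k / 2)" using assms by (intro mult_left_mono) auto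
  then show left: "(1 - a) / a \<le> M" unfolding M_def by (simp add: field_simps)
  have "1 \<le> a / (1 - a) \<or> 1 \<le> (1 - a) / a"
    using assms by (cases "a \<le> 1 / 2") (simp_all add: field_simps)
  then show "1 \<le> M" using left right by linarith
qed

lemma agent_cost_mech_le:
  assumes "t \<in> {1..n}" "i \<in> {1..n}" "0 < a" "a < 1" "2 \<le> k"
  shows "agent_cost (mech n t k a x) (x i)
           \<le> max (((1 - a) * k) / (2 * a)) ((a * k) / (2 * (1 - a))) * OPT n x"
proof -
  define M where "M = max (((1 - a) * k) / (2 * a)) ((a * k) / (2 * (1 - a)))"
  define S where "S = x ` {1..n}"
  define xl where "xl = Min S"
  define xr where "xr = Max S"
  have fin: "finite S" "S \<noteq> {}" unfolding S_def using assms(2) by auto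
  have mem: "xl \<in> S" "x t \<in> S" "xr \<in> S" "x i \<in> S"
    unfolding xl_def xr_def using fin assms(1,2) by (auto simp: S_def)
  have bounds: "xl \<le> y" "y \<le> xr" if "y \<in> S" for y
    unfolding xl_def xr_def using fin that by simp_all
  have gap: "min (v - u) (w - v) \<le> OPT n x"
    if "u \<in> S" "v \<in> S" "w \<in> S" "u \<le> v" "v \<le> w" for u v w
    using that min_gap_le_OPT unfolding S_def by blast
  note M_bounds = dictator_ratio_bounds[OF assms(3-5), folded M_def]
  have mech_eq: "mech n t k a x = (x t,
      if xl \<le> x t \<and> x t < xl + a * (xr - xl)
      then x t + max (((1 - a) * k / a) * (x t - xl)) (xr - x t)
      else x t - max (x t - xl) ((a * k / (1 - a)) * (xr - x t)))"
    unfolding mech_def xl_def xr_def S_def Let_def by simp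
  show ?thesis
  proof (cases "x t < xl + a * (xr - xl)")
    case True
    have left: "x t - xl \<le> a / (1 - a) * (xr - x t)"
      using True assms(3,4) by (simp add: field_simps)
    have "agent_cost (mech n t k a x) (x i)
          = min \<bar>x t - x i\<bar> \<bar>x t + max (((1 - a) * k / a) * (x t - xl)) (xr - x t) - x i\<bar>"
      unfolding mech_eq agent_cost_def using True bounds[OF mem(2)] by simp
    also have "\<dots> \<le> M * OPT n x"
      by (rule dictator_left_cost_le[OF gap mem bounds(1)[OF mem(2)] bounds(2)[OF mem(2)]
            bounds[OF mem(4)] left OPT_nonneg M_bounds(1,2,4)])
    finally show ?thesis unfolding M_def .
  next
    case False
    have right: "xr - x t \<le> (1 - a) / a * (x t - xl)"
      using False assms(3,4) by (simp add: field_simps)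
    have "agent_cost (mech n t k a x) (x i)
          = min \<bar>x t - x i\<bar> \<bar>x t - max (x t - xl) ((a * k / (1 - a)) * (xr - x t)) - x i\<bar>"
      unfolding mech_eq agent_cost_def using False by simp
    also have "\<dots> \<le> M * OPT n x"
      by (rule dictator_right_cost_le[OF gap mem bounds(1)[OF mem(2)] bounds(2)[OF mem(2)]
            bounds[OF mem(4)] right OPT_nonneg M_bounds(1,3,5)])
    finally show ?thesis unfolding M_def .
  qed
qed

lemma SC_le_dictator:
  assumes "t \<in> {1..n}" "agent_cost loc (x t) = 0"
    and "\<And>i. i \<in> {1..n} \<Longrightarrow> i \<noteq> t \<Longrightarrow> agent_cost loc (x i) \<le> B"
  shows "SC n x loc \<le> (real n - 1) * B"
proof -
  have "SC n x loc = (\<Sum>i\<in>{1..n} - {t}. agent_cost loc (x i))"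
    unfolding SC_def using assms(1,2) by (simp add: sum.remove)
  also have "\<dots> \<le> (\<Sum>i\<in>{1..n} - {t}. B)" by (rule sum_mono) (use assms in auto)
  also have "\<dots> = (real n - 1) * B" using assms(1) by (simp add: of_nat_diff)
  finally show ?thesis .
qed

theorem theorem4:
  fixes n t :: nat and k a :: real and x :: "nat \<Rightarrow> real"
  assumes "n \<ge> 2" and "t \<in> {1..n}" and "k \<ge> 2" and "0 < a" and "a < 1"
  shows "SC n x (mech n t k a x)
           \<le> max (((1 - a) * k) / (2 * a)) ((a * k) / (2 * (1 - a))) * (real n - 1) * OPT n x"
proof -
  have "agent_cost (mech n t k a x) (x t) = 0" by (simp add: agent_cost_def mech_def Let_def)
  then have "SC n x (mech n t k a x)
        \<le> (real n - 1) * (max (((1 - a) * k) / (2 * a)) ((a * k) / (2 * (1 - a))) * OPT n x)"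
    using SC_le_dictator agent_cost_mech_le assms(2-5) by blast
  then show ?thesis by (simp add: algebra_simps)
qed

end
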